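(* Let $(M,d)$ be a metric space and let $X,Y,Z\subseteq M$. Let $\mathcal{N}$ be a $\sigma$-algebra of subsets of $Y$ containing all Borel subsets of $Y$, and let $\nu$ be a measure on $\mathcal{N}$ with $\nu(Y)<+\infty$. Let $\upsilon_Y\in]0,+\infty[$ and assume that $Y$ is upper $\upsilon_Y$-Ahlfors regular with respect to $X\cup Z$. Let $s_1,s_2\in[0,\upsilon_Y[$. If $s_1+s_2=\upsilon_Y$, assume furthermore that $Y$ is strongly upper $\upsilon_Y$-Ahlfors regular with respect to $X\cup Z$. Then there exists a constant $c\in]0,+\infty[$ such that \[ \int_Y\frac{d\nu(y)}{d(x,y)^{s_1}d(y,z)^{s_2}}\leq \begin{cases} c\,\bigl(1+d(x,z)^{\upsilon_Y-(s_1+s_2)}\bigr) & \text{if } (x,z)\in X\times Z,\ s_1+s_2<\upsilon_Y,\\[2pt] c\,\bigl(1+|\log d(x,z)|\bigr) & \text{if } (x,z)\in X\times Z,\ x\neq z,\ s_1+s_2=\upsilon_Y,\\[2pt] c\, d(x,z)^{\upsilon_Y-(s_1+s_2)} & \text{if } (x,z)\in X\times Z,\ x\neq z,\ s_1+s_2>\upsilon_Y. \end{cases} \]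
   Context: For $\xi\in M$, $r>0$, $B(\xi,r)=\{\eta\in M: d(\xi,\eta)<r\}$, and $B(\xi,0)=\emptyset$. For $W\subseteq M$ and $\upsilon\in]0,+\infty[$: $Y$ is upper $\upsilon$-Ahlfors regular with respect to $W$ if there exist $r_0\in]0,+\infty]$ and $c_0\in]0,+\infty[$ such that $\nu(B(x,r)\cap Y)\leq c_0 r^{\upsilon}$ for all $x\in W$ and all $r\in]0,r_0[$. $Y$ is strongly upper $\upsilon$-Ahlfors regular with respect to $W$ if there exist $r_0\in]0,+\infty]$ and $c_0\in]0,+\infty[$ such that $\nu((B(x,r_2)\setminus B(x,r_1))\cap Y)\leq c_0(r_2^{\upsilon}-r_1^{\upsilon})$ for all $x\in W$ and all $r_1,r_2\in[0,r_0[$ with $r_1<r_2$. Integrands of the form $d(x,y)^{-s}$ with $s>0$ are understood as $+\infty$ where $d(x,y)=0$. *)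

theory Defs
  imports "HOL-Analysis.Analysis"
begin

definition upper_ahlfors_regular ::
  "'a::metric_space measure \<Rightarrow> 'a set \<Rightarrow> real \<Rightarrow> 'a set \<Rightarrow> bool" where
  "upper_ahlfors_regular nu Y v W \<longleftrightarrow>
     (\<exists>r0::ereal. r0 > 0 \<and> (\<exists>c0::real. c0 > 0 \<and>
        (\<forall>x\<in>W. \<forall>r::real. 0 < r \<and> ereal r < r0 \<longrightarrow>
            emeasure nu (ball x r \<inter> Y) \<le> ennreal (c0 * r powr v))))"

definition strongly_upper_ahlfors_regular ::
  "'a::metric_space measure \<Rightarrow> 'a set \<Rightarrow> real \<Rightarrow> 'a set \<Rightarrow> bool" where
  "strongly_upper_ahlfors_regular nu Y v W \<longleftrightarrow>
     (\<exists>r0::ereal. r0 > 0 \<and> (\<exists>c0::real. c0 > 0 \<and>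
        (\<forall>x\<in>W. \<forall>r1 r2::real. 0 \<le> r1 \<and> r1 < r2 \<and> ereal r2 < r0 \<longrightarrow>
            emeasure nu ((ball x r2 - ball x r1) \<inter> Y)
              \<le> ennreal (c0 * (r2 powr v - r1 powr v)))))"

definition inv_pow :: "real \<Rightarrow> real \<Rightarrow> ennreal" where
  "inv_pow s t = (if s = 0 then 1 else if t = 0 then \<infinity> else ennreal (t powr (- s)))"

end

theory Submission
  imports Defs
begin

text \<open>
  Since nu is finite, upper Ahlfors regularity gives nu(B(x,r) \<inter> Y) \<le> C r^v for all radii r.
  Put h = d(x,z)/2. As d(x,y) + d(y,z) \<ge> 2h, the kernel is at most h^-s2 d(x,y)^-s1 on B(x,h),
  at most h^-s1 d(y,z)^-s2 on B(z,h), and at most d(p,y)^-(s1+s2) outside B(p,h), where p is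
  the centre nearer to y. Summing the regularity bound over the dyadic shells
  2^k rho \<le> d(p,y) \<le> 2^(k+1) rho, shell k contributes at most C 4^v (2^k rho)^(v-s). Hence
  the near integrals are O(h^(v-s1-s2)), and the far integrals are O(1), O(1 + |log h|)
  (O(1) per shell, O(|log h|) shells below radius 1) or O(h^(v-s1-s2)), according as s1 + s2
  is below, equal to or above v.
\<close>

lemma inv_pow_of_pos: "0 < t \<Longrightarrow> inv_pow s t = ennreal (t powr (- s))"
  by (simp add: inv_pow_def)

lemma inv_pow_antimono:
  assumes "0 \<le> s" "0 < a" "a \<le> b"
  shows "inv_pow s b \<le> inv_pow s a"
  using assms by (auto simp: inv_pow_of_pos intro!: ennreal_leI powr_mono2')

lemma inv_pow_le_powr:
  assumes "0 \<le> s" "0 < a" "a \<le> t"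
  shows "inv_pow s t \<le> ennreal (a powr (- s))"
  using inv_pow_antimono[OF assms] assms by (simp add: inv_pow_of_pos)

lemma inv_pow_le_one: "0 \<le> s \<Longrightarrow> 1 \<le> t \<Longrightarrow> inv_pow s t \<le> 1"
  using inv_pow_le_powr[of s 1 t] by simp

lemma inv_pow_mult_inv_pow:
  assumes "0 \<le> s1" "0 \<le> s2" "0 \<le> t"
  shows "inv_pow s1 t * inv_pow s2 t = inv_pow (s1 + s2) t"
proof (cases "s1 = 0 \<or> s2 = 0 \<or> t = 0")
  case True
  then show ?thesis
    using assms by (auto simp: inv_pow_def)
next
  case False
  then have "s1 + s2 \<noteq> 0"
    using assms by auto
  moreover have "t powr (- (s1 + s2)) = t powr (- s1) * t powr (- s2)"
    by (simp add: powr_add[symmetric])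
  ultimately show ?thesis
    using False by (simp add: inv_pow_def ennreal_mult)
qed

lemma borel_measurable_inv_pow [measurable]: "inv_pow s \<in> borel_measurable borel"
  unfolding inv_pow_def by measurable

lemma dyadic_bracket:
  assumes "0 < (a::real)" "a \<le> t"
  shows "\<exists>k::nat. a * 2 ^ k \<le> t \<and> t \<le> a * 2 ^ Suc k"
proof -
  obtain n where "t / a < 2 ^ n"
    using real_arch_pow[of 2 "t / a"] by auto
  then have ex: "\<exists>n. t < a * 2 ^ n"
    using assms by (auto simp: field_simps)
  define m where "m = (LEAST n. t < a * 2 ^ n)"
  have m: "t < a * 2 ^ m"
    unfolding m_def by (rule LeastI_ex[OF ex])
  then obtain k where k: "m = Suc k"
    using assms by (cases m) auto
  then have "\<not> t < a * 2 ^ k"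
    using not_less_Least[of k "\<lambda>n. t < a * 2 ^ n"] by (auto simp: m_def)
  then show ?thesis
    using m k by (auto simp: not_less)
qed

lemma dyadic_steps_to_one:
  assumes "0 < (\<rho>::real)"
  shows "\<exists>N::nat. 1 \<le> \<rho> * 2 ^ N \<and> real N \<le> \<bar>ln \<rho>\<bar> / ln 2 + 1"
proof (intro exI conjI)
  define l where "l = log 2 (1 / \<rho>)"
  show "1 \<le> \<rho> * 2 ^ nat \<lceil>l\<rceil>"
    using power_of_nat_log_ge[of 2 "1 / \<rho>"] assms by (simp add: l_def field_simps)
  have "\<bar>l\<bar> = \<bar>ln \<rho>\<bar> / ln 2"
    using assms by (simp add: l_def log_def ln_div)
  then show "real (nat \<lceil>l\<rceil>) \<le> \<bar>ln \<rho>\<bar> / ln 2 + 1"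
    by linarith
qed

lemma abs_ln_half_le:
  assumes "0 < (d::real)"
  shows "1 + \<bar>ln (d / 2)\<bar> / ln 2 \<le> (2 + 1 / ln 2) * (1 + \<bar>ln d\<bar>)"
proof -
  have "\<bar>ln (d / 2)\<bar> \<le> \<bar>ln d\<bar> + ln 2"
    using assms abs_triangle_ineq4[of "ln d" "ln 2"] by (simp add: ln_div)
  then have "\<bar>ln (d / 2)\<bar> / ln 2 \<le> \<bar>ln d\<bar> / ln 2 + 1"
    using divide_right_mono[of _ "\<bar>ln d\<bar> + ln 2" "ln 2"] by (simp add: add_divide_distrib)
  moreover have "(2 + 1 / ln 2) * (1 + \<bar>ln d\<bar>) = 2 + \<bar>ln d\<bar> / ln 2 + (2 * \<bar>ln d\<bar> + 1 / ln 2)"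
    by (simp add: algebra_simps add_divide_distrib)
  moreover have "0 \<le> 2 * \<bar>ln d\<bar> + 1 / ln 2"
    by simp
  ultimately show ?thesis
    by linarith
qed

lemma powr_mult_power:
  assumes "0 < a" "0 < (b::real)"
  shows "(a * b ^ k) powr e = a powr e * (b powr e) ^ k"
  using assms by (simp add: powr_mult powr_power powr_realpow[symmetric] powr_powr mult.commute)

lemma suminf_ennreal_geometric:
  assumes "0 \<le> c" "0 \<le> q" "q < (1::real)"
  shows "(\<Sum>k. ennreal (c * q ^ k)) = ennreal (c / (1 - q))"
proof (rule suminf_ennreal_eq)
  show "\<And>k. 0 \<le> c * q ^ k"
    using assms by simp
  show "(\<lambda>k. c * q ^ k) sums (c / (1 - q))"
    using sums_mult[OF geometric_sums, of q c] assms by simp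
qed

lemma ennreal_le_suminf: "(f k :: ennreal) \<le> (\<Sum>k. f k)"
  using sum_le_suminf[of f "{k}"] by simp

lemma inv_pow_mult_le_near_far:
  fixes a b h :: real
  assumes s: "0 \<le> s1" "0 \<le> s2" and h: "0 < h" and ab: "0 \<le> a" "0 \<le> b" "2 * h \<le> a + b"
  shows "inv_pow s1 a * inv_pow s2 b \<le>
      ennreal (h powr - s2) * (inv_pow s1 a * of_bool (a < h))
    + ennreal (h powr - s1) * (inv_pow s2 b * of_bool (b < h))
    + inv_pow (s1 + s2) a * of_bool (h \<le> a)
    + inv_pow (s1 + s2) b * of_bool (h \<le> b)"
    (is "_ \<le> ?T1 + ?T2 + ?T3 + ?T4")
proof -
  consider "a < h" | "b < h" | "h \<le> a" "a \<le> b" | "h \<le> b" "b \<le> a"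
    by linarith
  then show ?thesis
  proof cases
    case 1
    then have "inv_pow s2 b \<le> ennreal (h powr - s2)"
      using ab by (intro inv_pow_le_powr[OF s(2) h]) auto
    then have "inv_pow s1 a * inv_pow s2 b \<le> ?T1"
      using 1 by (simp add: mult.commute mult_left_mono)
    then show ?thesis
      by (simp add: add_increasing2)
  next
    case 2
    then have "inv_pow s1 a \<le> ennreal (h powr - s1)"
      using ab by (intro inv_pow_le_powr[OF s(1) h]) auto
    then have "inv_pow s1 a * inv_pow s2 b \<le> ?T2"
      using 2 by (simp add: mult_right_mono)
    then show ?thesis
      by (simp add: add_increasing add_increasing2)
  next
    case 3
    then have "inv_pow s1 a * inv_pow s2 b \<le> inv_pow s1 a * inv_pow s2 a"
      using h by (intro mult_left_mono inv_pow_antimono[OF s(2)]) auto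
    also have "\<dots> = ?T3"
      using 3 s ab by (simp add: inv_pow_mult_inv_pow)
    finally show ?thesis
      by (simp add: add_increasing add_increasing2)
  next
    case 4
    then have "inv_pow s1 a * inv_pow s2 b \<le> inv_pow s1 b * inv_pow s2 b"
      using h by (intro mult_right_mono inv_pow_antimono[OF s(1)]) auto
    also have "\<dots> = ?T4"
      using 4 s ab by (simp add: inv_pow_mult_inv_pow)
    finally show ?thesis
      by (simp add: add_increasing)
  qed
qed

lemma sets_borel_ball [measurable]: "ball x r \<in> sets borel"
  by (simp add: borel_open)

lemma borel_measurable_dist_left [measurable]: "dist x \<in> borel_measurable borel"
  by (intro borel_measurable_continuous_onI continuous_intros)

definition upper_ahlfors_bound ::
  "'a::metric_space measure \<Rightarrow> 'a set \<Rightarrow> real \<Rightarrow> real \<Rightarrow> 'a \<Rightarrow> bool" where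
  "upper_ahlfors_bound nu Y C v x \<longleftrightarrow>
     (\<forall>r>0. emeasure nu (ball x r \<inter> Y) \<le> ennreal (C * r powr v))"

lemma upper_ahlfors_regular_imp_bound:
  assumes reg: "upper_ahlfors_regular nu Y v W" and v: "0 < v"
    and finite: "emeasure nu Y < \<infinity>" and space: "space nu = Y"
  shows "\<exists>C>0. \<forall>x\<in>W. upper_ahlfors_bound nu Y C v x"
proof -
  obtain r0 c0 where "r0 > 0" and c0: "c0 > 0" and local_bound: "\<And>x r. x \<in> W \<Longrightarrow> 0 < r \<Longrightarrow>
      ereal r < r0 \<Longrightarrow> emeasure nu (ball x r \<inter> Y) \<le> ennreal (c0 * r powr v)"
    using reg unfolding upper_ahlfors_regular_def by blast
  then obtain \<rho> where \<rho>: "0 < \<rho>" "ereal \<rho> < r0"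
    using ereal_dense2 by force
  define V where "V = enn2real (emeasure nu Y)"
  have V: "emeasure nu Y = ennreal V" "0 \<le> V"
    using finite by (simp_all add: V_def ennreal_enn2real less_top)
  define C where "C = c0 + V / \<rho> powr v"
  have "upper_ahlfors_bound nu Y C v x" if x: "x \<in> W" for x
    unfolding upper_ahlfors_bound_def
  proof (intro allI impI)
    fix r :: real
    assume r: "0 < r"
    show "emeasure nu (ball x r \<inter> Y) \<le> ennreal (C * r powr v)"
    proof (cases "r < \<rho>")
      case True
      then have "ereal r < r0"
        using \<rho>(2) by (metis less_ereal.simps(1) less_trans)
      then have "emeasure nu (ball x r \<inter> Y) \<le> ennreal (c0 * r powr v)"
        using local_bound[OF x r] by blast
      also have "\<dots> \<le> ennreal (C * r powr v)"
        using V by (intro ennreal_leI) (simp add: C_def distrib_right)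
      finally show ?thesis .
    next
      case False
      have "emeasure nu (ball x r \<inter> Y) \<le> ennreal V"
        using emeasure_space[of nu "ball x r \<inter> Y"] V space by simp
      also have "\<dots> \<le> ennreal (C * r powr v)"
      proof (rule ennreal_leI)
        have "V \<le> V / \<rho> powr v * r powr v"
          using False \<rho> V v by (simp add: field_simps mult_left_mono powr_mono2)
        then show "V \<le> C * r powr v"
          using c0 by (simp add: C_def distrib_right add_increasing)
      qed
      finally show ?thesis .
    qed
  qed
  moreover have "0 < C"
    using c0 \<rho> V by (simp add: C_def add_pos_nonneg)
  ultimately show ?thesis
    by blast
qed

locale finite_borel_measure_on =
  fixes nu :: "'a::metric_space measure" and Y :: "'a set" and V v C :: real
  assumes space_eq: "space nu = Y"
    and borel_subset: "sets (restrict_space borel Y) \<subseteq> sets nu"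
    and emeasure_space_eq: "emeasure nu Y = ennreal V" and V_nonneg: "0 \<le> V"
    and v_pos: "0 < v" and C_pos: "0 < C"
begin

lemma borel_measurable_nu: "g \<in> borel_measurable borel \<Longrightarrow> g \<in> borel_measurable nu"
  using measurable_restrict_space1[of g borel borel Y] borel_subset space_eq
  by (auto simp: measurable_def space_restrict_space)

lemma borel_inter_in_sets: "A \<in> sets borel \<Longrightarrow> A \<inter> Y \<in> sets nu"
  using borel_subset by (auto simp: sets_restrict_space)

lemma nn_integral_indicator_ball:
  "(\<integral>\<^sup>+ y. indicator (ball x r) y \<partial>nu) = emeasure nu (ball x r \<inter> Y)"
proof -
  have "(\<integral>\<^sup>+ y. indicator (ball x r) y \<partial>nu) = (\<integral>\<^sup>+ y. indicator (ball x r \<inter> Y) y \<partial>nu)"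
    by (rule nn_integral_cong) (auto simp: space_eq indicator_def)
  then show ?thesis
    by (simp add: borel_inter_in_sets)
qed

lemma nn_integral_le_plus_one:
  assumes "\<And>y. f y \<le> g y + 1" and "g \<in> borel_measurable borel"
  shows "(\<integral>\<^sup>+ y. f y \<partial>nu) \<le> (\<integral>\<^sup>+ y. g y \<partial>nu) + ennreal V"
proof -
  have "(\<integral>\<^sup>+ y. f y \<partial>nu) \<le> (\<integral>\<^sup>+ y. g y + 1 \<partial>nu)"
    by (rule nn_integral_mono) (rule assms(1))
  also have "\<dots> = (\<integral>\<^sup>+ y. g y \<partial>nu) + ennreal V"
    using assms(2) emeasure_space_eq space_eq by (simp add: nn_integral_add borel_measurable_nu)
  finally show ?thesis .
qed

lemma AE_ne_point:
  assumes "upper_ahlfors_bound nu Y C v x"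
  shows "AE y in nu. y \<noteq> x"
proof (rule AE_I')
  have "emeasure nu ({x} \<inter> Y) \<le> 0 + ennreal e" if "0 < e" for e
  proof -
    define r where "r = (e / C) powr (1 / v)"
    have r: "0 < r" "C * r powr v = e"
      using \<open>0 < e\<close> C_pos v_pos by (simp_all add: r_def powr_powr)
    have "emeasure nu ({x} \<inter> Y) \<le> emeasure nu (ball x r \<inter> Y)"
      by (rule emeasure_mono) (use r in \<open>auto simp: borel_inter_in_sets\<close>)
    also have "\<dots> \<le> ennreal e"
      using assms r unfolding upper_ahlfors_bound_def by metis
    finally show ?thesis
      by simp
  qed
  then have "emeasure nu ({x} \<inter> Y) = 0"
    using ennreal_le_epsilon by (metis le_zero_eq)
  then show "{x} \<inter> Y \<in> null_sets nu"
    by (simp add: null_sets_def borel_inter_in_sets)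
  show "{y \<in> space nu. \<not> y \<noteq> x} \<subseteq> {x} \<inter> Y"
    by (auto simp: space_eq)
qed

text \<open>The factor \<open>indicator I k\<close> keeps only the shells that are used, so the finite
  decomposition of the critical case is covered as well.\<close>

lemma nn_integral_le_shell_sum:
  assumes x: "upper_ahlfors_bound nu Y C v x" and s: "0 \<le> s" and r: "\<And>k. 0 < r k"
    and g_le: "\<And>y. g y \<le> inv_pow s (dist x y)"
    and cover: "\<And>y. y \<noteq> x \<Longrightarrow> g y \<noteq> 0 \<Longrightarrow> \<exists>k\<in>I. r k \<le> dist x y \<and> dist x y \<le> 2 * r k"
  shows "(\<integral>\<^sup>+ y. g y \<partial>nu) \<le> (\<Sum>k. ennreal (C * 4 powr v * r k powr (v - s)) * indicator I k)"
proof -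
  define w where "w k = ennreal (r k powr (- s)) * indicator I k" for k
  have shells: "g y \<le> (\<Sum>k. w k * indicator (ball x (4 * r k)) y)" if ne: "y \<noteq> x" for y
  proof (cases "g y = 0")
    case False
    then obtain k where k: "k \<in> I" "r k \<le> dist x y" "dist x y \<le> 2 * r k"
      using cover[OF ne] by blast
    have "g y \<le> ennreal (r k powr (- s))"
      using g_le inv_pow_le_powr[OF s r k(2)] by (rule order_trans)
    also have "\<dots> = w k * indicator (ball x (4 * r k)) y"
      using k r[of k] by (simp add: w_def)
    also have "\<dots> \<le> (\<Sum>k. w k * indicator (ball x (4 * r k)) y)"
      by (rule ennreal_le_suminf)
    finally show ?thesis .
  qed simp
  have "(\<integral>\<^sup>+ y. g y \<partial>nu) \<le> (\<integral>\<^sup>+ y. (\<Sum>k. w k * indicator (ball x (4 * r k)) y) \<partial>nu)"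
    using AE_ne_point[OF x] shells by (auto intro!: nn_integral_mono_AE elim: eventually_mono)
  also have "\<dots> = (\<Sum>k. w k * emeasure nu (ball x (4 * r k) \<inter> Y))"
    by (simp add: nn_integral_suminf nn_integral_cmult borel_measurable_nu nn_integral_indicator_ball)
  also have "\<dots> \<le> (\<Sum>k. w k * ennreal (C * (4 * r k) powr v))"
    using x r by (intro suminf_le mult_left_mono) (auto simp: upper_ahlfors_bound_def)
  also have "\<dots> = (\<Sum>k. ennreal (C * 4 powr v * r k powr (v - s)) * indicator I k)"
  proof (rule suminf_cong)
    fix k
    have "w k * ennreal (C * (4 * r k) powr v)
        = ennreal (r k powr (- s) * (C * (4 * r k) powr v)) * indicator I k"
      using C_pos by (simp add: w_def ennreal_mult mult_ac)
    also have "r k powr (- s) * (C * (4 * r k) powr v) = C * 4 powr v * r k powr (v - s)"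
      using r[of k] by (simp add: powr_mult powr_diff powr_minus field_simps)
    finally show "w k * ennreal (C * (4 * r k) powr v)
        = ennreal (C * 4 powr v * r k powr (v - s)) * indicator I k" .
  qed
  finally show ?thesis .
qed

definition ball_constant :: "real \<Rightarrow> real" where
  "ball_constant s = C * 4 powr v / (1 - 2 powr (s - v))"

lemma ball_constant_pos: "s < v \<Longrightarrow> 0 < ball_constant s"
  using C_pos powr_less_one[of 2 "s - v"] by (simp add: ball_constant_def)

lemma nn_integral_inv_pow_ball:
  assumes x: "upper_ahlfors_bound nu Y C v x" and s: "0 \<le> s" "s < v" and R: "0 < R"
  shows "(\<integral>\<^sup>+ y. inv_pow s (dist x y) * indicator (ball x R) y \<partial>nu)
    \<le> ennreal (ball_constant s * R powr (v - s))"
proof -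
  define r where "r k = R / 2 * (1 / 2) ^ k" for k :: nat
  define q :: real where "q = 2 powr (s - v)"
  have q: "0 \<le> q" "q < 1" "(1 / 2) powr (v - s) = q"
    using s by (simp_all add: q_def powr_less_one powr_divide powr_minus_divide[symmetric])
  have r_powr: "r k powr (v - s) = (R / 2) powr (v - s) * q ^ k" for k
    unfolding r_def q(3)[symmetric] using R by (subst powr_mult_power) auto
  have "(\<integral>\<^sup>+ y. inv_pow s (dist x y) * indicator (ball x R) y \<partial>nu)
      \<le> (\<Sum>k. ennreal (C * 4 powr v * r k powr (v - s)) * indicator UNIV k)"
  proof (rule nn_integral_le_shell_sum[OF x s(1)])
    show "0 < r k" for k
      using R by (simp add: r_def)
    show "inv_pow s (dist x y) * indicator (ball x R) y \<le> inv_pow s (dist x y)" for y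
      by (simp add: indicator_def)
    fix y
    assume "y \<noteq> x" "inv_pow s (dist x y) * indicator (ball x R) y \<noteq> 0"
    then have "0 < dist x y" "dist x y \<le> R"
      by (auto simp: indicator_def)
    then obtain k where "dist x y * 2 ^ k \<le> R" "R \<le> dist x y * 2 ^ Suc k"
      using dyadic_bracket by blast
    then have "r k \<le> dist x y \<and> dist x y \<le> 2 * r k"
      by (simp add: r_def power_one_over field_simps)
    then show "\<exists>k\<in>UNIV. r k \<le> dist x y \<and> dist x y \<le> 2 * r k"
      by blast
  qed
  also have "\<dots> = (\<Sum>k. ennreal (C * 4 powr v * (R / 2) powr (v - s) * q ^ k))"
    using r_powr by (simp add: mult.assoc)
  also have "\<dots> = ennreal (C * 4 powr v * (R / 2) powr (v - s) / (1 - q))"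
    using C_pos q by (intro suminf_ennreal_geometric) auto
  also have "\<dots> \<le> ennreal (ball_constant s * R powr (v - s))"
    using C_pos R s q by (intro ennreal_leI) (simp add: ball_constant_def q_def divide_right_mono powr_mono2)
  finally show ?thesis .
qed

lemma nn_integral_inv_pow_outside_ball:
  assumes x: "upper_ahlfors_bound nu Y C v x" and s: "v < s" and \<rho>: "0 < \<rho>"
  shows "(\<integral>\<^sup>+ y. inv_pow s (dist x y) * indicator (- ball x \<rho>) y \<partial>nu)
    \<le> ennreal (C * 4 powr v / (1 - 2 powr (v - s)) * \<rho> powr (v - s))"
proof -
  define r where "r k = \<rho> * 2 ^ k" for k :: nat
  define q :: real where "q = 2 powr (v - s)"
  have q: "0 \<le> q" "q < 1"
    using s by (simp_all add: q_def powr_less_one)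
  have r_powr: "r k powr (v - s) = \<rho> powr (v - s) * q ^ k" for k
    unfolding r_def q_def using \<rho> by (subst powr_mult_power) auto
  have "(\<integral>\<^sup>+ y. inv_pow s (dist x y) * indicator (- ball x \<rho>) y \<partial>nu)
      \<le> (\<Sum>k. ennreal (C * 4 powr v * r k powr (v - s)) * indicator UNIV k)"
  proof (rule nn_integral_le_shell_sum[OF x])
    show "0 \<le> s" "0 < r k" for k
      using s v_pos \<rho> by (simp_all add: r_def)
    show "inv_pow s (dist x y) * indicator (- ball x \<rho>) y \<le> inv_pow s (dist x y)" for y
      by (simp add: indicator_def)
    fix y
    assume "inv_pow s (dist x y) * indicator (- ball x \<rho>) y \<noteq> 0"
    then have "\<rho> \<le> dist x y"
      by (auto simp: indicator_def)
    then obtain k where "\<rho> * 2 ^ k \<le> dist x y" "dist x y \<le> \<rho> * 2 ^ Suc k"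
      using dyadic_bracket \<rho> by blast
    then show "\<exists>k\<in>UNIV. r k \<le> dist x y \<and> dist x y \<le> 2 * r k"
      by (auto simp: r_def)
  qed
  also have "\<dots> = (\<Sum>k. ennreal (C * 4 powr v * \<rho> powr (v - s) * q ^ k))"
    using r_powr by (simp add: mult.assoc)
  also have "\<dots> = ennreal (C * 4 powr v / (1 - 2 powr (v - s)) * \<rho> powr (v - s))"
    using C_pos q by (subst suminf_ennreal_geometric) (auto simp: q_def)
  finally show ?thesis .
qed

lemma nn_integral_inv_pow_outside_ball_critical:
  assumes x: "upper_ahlfors_bound nu Y C v x" and \<rho>: "0 < \<rho>"
  shows "(\<integral>\<^sup>+ y. inv_pow v (dist x y) * indicator (- ball x \<rho>) y \<partial>nu)
    \<le> ennreal (C * 4 powr v * (1 + \<bar>ln \<rho>\<bar> / ln 2) + V)"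
proof -
  obtain N where N: "1 \<le> \<rho> * 2 ^ N" "real N \<le> \<bar>ln \<rho>\<bar> / ln 2 + 1"
    using dyadic_steps_to_one[OF \<rho>] by blast
  define r where "r k = \<rho> * 2 ^ k" for k :: nat
  define g where "g y = inv_pow v (dist x y) * indicator (ball x 1 - ball x \<rho>) y" for y
  have shells: "(\<integral>\<^sup>+ y. g y \<partial>nu) \<le> ennreal (real N * (C * 4 powr v))"
  proof -
    have "(\<integral>\<^sup>+ y. g y \<partial>nu)
        \<le> (\<Sum>k. ennreal (C * 4 powr v * r k powr (v - v)) * indicator {..<N} k)"
    proof (rule nn_integral_le_shell_sum[OF x])
      show "0 \<le> v" "0 < r k" for k
        using v_pos \<rho> by (simp_all add: r_def)
      show "g y \<le> inv_pow v (dist x y)" for y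
        by (simp add: g_def indicator_def)
      fix y
      assume "g y \<noteq> 0"
      then have y: "\<rho> \<le> dist x y" "dist x y < 1"
        by (auto simp: g_def indicator_def)
      then obtain k where k: "r k \<le> dist x y" "dist x y \<le> 2 * r k"
        using dyadic_bracket[OF \<rho> y(1)] by (auto simp: r_def)
      then have "r k < r N"
        using y N(1) by (simp add: r_def)
      then have "k < N"
        using \<rho> by (simp add: r_def)
      then show "\<exists>k\<in>{..<N}. r k \<le> dist x y \<and> dist x y \<le> 2 * r k"
        using k by blast
    qed
    also have "\<dots> = ennreal (real N * (C * 4 powr v))"
      using \<rho> C_pos
      by (subst suminf_finite[of "{..<N}"]) (auto simp: r_def ennreal_of_nat_eq_real_of_nat ennreal_mult)
    finally show ?thesis .
  qed
  have "(\<integral>\<^sup>+ y. inv_pow v (dist x y) * indicator (- ball x \<rho>) y \<partial>nu)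
      \<le> (\<integral>\<^sup>+ y. g y \<partial>nu) + ennreal V"
  proof (rule nn_integral_le_plus_one)
    show "inv_pow v (dist x y) * indicator (- ball x \<rho>) y \<le> g y + 1" for y
      using inv_pow_le_one[of v "dist x y"] v_pos
      by (cases "dist x y < 1") (auto simp: g_def indicator_def add_increasing)
    show "g \<in> borel_measurable borel"
      unfolding g_def by measurable
  qed
  also have "\<dots> \<le> ennreal (real N * (C * 4 powr v)) + ennreal V"
    using shells by (rule add_right_mono)
  also have "\<dots> \<le> ennreal (C * 4 powr v * (1 + \<bar>ln \<rho>\<bar> / ln 2) + V)"
    using N(2) C_pos V_nonneg by (simp add: ennreal_plus[symmetric] del: ennreal_plus)
  finally show ?thesis .
qed

lemma nn_integral_inv_pow:
  assumes x: "upper_ahlfors_bound nu Y C v x" and s: "0 \<le> s" "s < v"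
  shows "(\<integral>\<^sup>+ y. inv_pow s (dist x y) \<partial>nu) \<le> ennreal (ball_constant s + V)"
proof -
  have "(\<integral>\<^sup>+ y. inv_pow s (dist x y) \<partial>nu)
      \<le> (\<integral>\<^sup>+ y. inv_pow s (dist x y) * indicator (ball x 1) y \<partial>nu) + ennreal V"
  proof (rule nn_integral_le_plus_one)
    show "inv_pow s (dist x y) \<le> inv_pow s (dist x y) * indicator (ball x 1) y + 1" for y
      using inv_pow_le_one[OF s(1), of "dist x y"]
      by (cases "dist x y < 1") (auto simp: indicator_def add_increasing)
  qed measurable
  also have "\<dots> \<le> ennreal (ball_constant s * 1 powr (v - s)) + ennreal V"
    using nn_integral_inv_pow_ball[OF x s zero_less_one] by (rule add_right_mono)
  also have "\<dots> = ennreal (ball_constant s + V)"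
    using ball_constant_pos[OF s(2)] V_nonneg by (simp add: ennreal_plus)
  finally show ?thesis .
qed

lemma nn_integral_inv_pow_product_le:
  assumes x: "upper_ahlfors_bound nu Y C v x" and z: "upper_ahlfors_bound nu Y C v z"
    and s1: "0 \<le> s1" "s1 < v" and s2: "0 \<le> s2" "s2 < v" and "x \<noteq> z" and "0 \<le> F"
    and far_le: "\<And>p. upper_ahlfors_bound nu Y C v p \<Longrightarrow>
      (\<integral>\<^sup>+ y. inv_pow (s1 + s2) (dist p y) * indicator (- ball p (dist x z / 2)) y \<partial>nu) \<le> ennreal F"
  shows "(\<integral>\<^sup>+ y. inv_pow s1 (dist x y) * inv_pow s2 (dist y z) \<partial>nu)
    \<le> ennreal ((ball_constant s1 + ball_constant s2) * (dist x z / 2) powr (v - (s1 + s2)) + 2 * F)"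
proof -
  define h where "h = dist x z / 2"
  have h: "0 < h"
    using \<open>x \<noteq> z\<close> by (simp add: h_def)
  define near where "near s' s p y = ennreal (h powr - s') * (inv_pow s (dist p y) * indicator (ball p h) y)"
    for s' s and p y :: 'a
  define far where "far p y = inv_pow (s1 + s2) (dist p y) * indicator (- ball p h) y" for p y :: 'a
  have near_le: "(\<integral>\<^sup>+ y. near s' s p y \<partial>nu) \<le> ennreal (ball_constant s * h powr (v - (s1 + s2)))"
    if "upper_ahlfors_bound nu Y C v p" "0 \<le> s" "s < v" "s + s' = s1 + s2" for s s' p
  proof -
    have "(\<integral>\<^sup>+ y. near s' s p y \<partial>nu)
        = ennreal (h powr - s') * (\<integral>\<^sup>+ y. inv_pow s (dist p y) * indicator (ball p h) y \<partial>nu)"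
      unfolding near_def by (rule nn_integral_cmult) (rule borel_measurable_nu, measurable)
    also have "\<dots> \<le> ennreal (h powr - s') * ennreal (ball_constant s * h powr (v - s))"
      using nn_integral_inv_pow_ball[OF that(1-3) h] by (rule mult_left_mono) simp
    also have "\<dots> = ennreal (ball_constant s * h powr (v - (s1 + s2)))"
      using h ball_constant_pos[OF that(3)] that(4)
      by (simp add: ennreal_mult[symmetric] powr_add[symmetric] algebra_simps)
    finally show ?thesis .
  qed
  have "inv_pow s1 (dist x y) * inv_pow s2 (dist y z) \<le> near s2 s1 x y + near s1 s2 z y + far x y + far z y"
    for y
    using inv_pow_mult_le_near_far[OF s1(1) s2(1) h, of "dist x y" "dist z y"]
      dist_triangle[of x z y]
    by (simp add: near_def far_def h_def indicator_def dist_commute not_less)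
  then have "(\<integral>\<^sup>+ y. inv_pow s1 (dist x y) * inv_pow s2 (dist y z) \<partial>nu)
      \<le> (\<integral>\<^sup>+ y. near s2 s1 x y + near s1 s2 z y + far x y + far z y \<partial>nu)"
    by (rule nn_integral_mono)
  also have "\<dots> = (\<integral>\<^sup>+ y. near s2 s1 x y \<partial>nu) + (\<integral>\<^sup>+ y. near s1 s2 z y \<partial>nu)
      + (\<integral>\<^sup>+ y. far x y \<partial>nu) + (\<integral>\<^sup>+ y. far z y \<partial>nu)"
    unfolding near_def far_def
    by (subst nn_integral_add; (rule borel_measurable_nu, measurable)?)+ (rule refl)
  also have "\<dots> \<le> ennreal (ball_constant s1 * h powr (v - (s1 + s2)))
      + ennreal (ball_constant s2 * h powr (v - (s1 + s2))) + ennreal F + ennreal F"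
    using near_le[OF x s1] near_le[OF z s2] far_le[OF x] far_le[OF z]
    by (intro add_mono) (auto simp: far_def h_def)
  also have "\<dots> = ennreal ((ball_constant s1 + ball_constant s2) * h powr (v - (s1 + s2)) + 2 * F)"
    using ball_constant_pos[OF s1(2)] ball_constant_pos[OF s2(2)] \<open>0 \<le> F\<close>
    by (simp add: distrib_right ennreal_plus[symmetric] del: ennreal_plus)
  finally show ?thesis
    by (simp add: h_def)
qed

lemma kernel_integral_bound_subcritical:
  assumes s1: "0 \<le> s1" and s2: "0 \<le> s2" and sub: "s1 + s2 < v"
  shows "\<exists>c>0. \<forall>x z. upper_ahlfors_bound nu Y C v x \<longrightarrow> upper_ahlfors_bound nu Y C v z \<longrightarrow>
    (\<integral>\<^sup>+ y. inv_pow s1 (dist x y) * inv_pow s2 (dist y z) \<partial>nu)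
      \<le> ennreal (c * (1 + dist x z powr (v - (s1 + s2))))"
proof -
  define s where "s = s1 + s2"
  have s: "0 \<le> s" "s < v" "s1 < v" "s2 < v"
    using s1 s2 sub by (simp_all add: s_def)
  define B where "B = ball_constant s1 + ball_constant s2"
  define K where "K = ball_constant s + V"
  define c where "c = B + 2 * K"
  have B: "0 < B" and K: "0 < K"
    using ball_constant_pos[OF s(2)] ball_constant_pos[OF s(3)] ball_constant_pos[OF s(4)] V_nonneg
    by (simp_all add: B_def K_def)
  have total_le: "(\<integral>\<^sup>+ y. inv_pow s (dist p y) * indicator A y \<partial>nu) \<le> ennreal K"
    if "upper_ahlfors_bound nu Y C v p" for p A
  proof -
    have "(\<integral>\<^sup>+ y. inv_pow s (dist p y) * indicator A y \<partial>nu) \<le> (\<integral>\<^sup>+ y. inv_pow s (dist p y) \<partial>nu)"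
      by (intro nn_integral_mono) (simp add: indicator_def)
    also have "\<dots> \<le> ennreal K"
      using nn_integral_inv_pow[OF that s(1,2)] by (simp add: K_def)
    finally show ?thesis .
  qed
  have "(\<integral>\<^sup>+ y. inv_pow s1 (dist x y) * inv_pow s2 (dist y z) \<partial>nu)
      \<le> ennreal (c * (1 + dist x z powr (v - s)))"
    if x: "upper_ahlfors_bound nu Y C v x" and z: "upper_ahlfors_bound nu Y C v z" for x z
  proof (cases "x = z")
    case True
    then have "(\<integral>\<^sup>+ y. inv_pow s1 (dist x y) * inv_pow s2 (dist y z) \<partial>nu)
        = (\<integral>\<^sup>+ y. inv_pow s (dist x y) * indicator UNIV y \<partial>nu)"
      using s1 s2 by (simp add: dist_commute inv_pow_mult_inv_pow s_def)
    also have "\<dots> \<le> ennreal K"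
      by (rule total_le[OF x])
    also have "\<dots> \<le> ennreal (c * (1 + dist x z powr (v - s)))"
      using True B K by (intro ennreal_leI) (simp add: c_def)
    finally show ?thesis .
  next
    case False
    define d where "d = dist x z"
    have "(d / 2) powr (v - s) \<le> d powr (v - s)"
      using False s by (intro powr_mono2) (auto simp: d_def)
    then have "B * (d / 2) powr (v - s) \<le> B * d powr (v - s)"
      using B by (intro mult_left_mono) auto
    moreover have "c * (1 + d powr (v - s)) = B + B * d powr (v - s) + 2 * K + 2 * (K * d powr (v - s))"
      by (simp add: c_def algebra_simps)
    moreover have "0 \<le> K * d powr (v - s)"
      using K by simp
    ultimately have arith: "B * (d / 2) powr (v - s) + 2 * K \<le> c * (1 + d powr (v - s))"
      using B by linarith
    have "(\<integral>\<^sup>+ y. inv_pow s1 (dist x y) * inv_pow s2 (dist y z) \<partial>nu)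
        \<le> ennreal (B * (d / 2) powr (v - s) + 2 * K)"
      using nn_integral_inv_pow_product_le[OF x z s1 s(3) s2 s(4) False, of K] total_le K
      unfolding B_def d_def s_def by simp
    also have "\<dots> \<le> ennreal (c * (1 + dist x z powr (v - s)))"
      using arith by (intro ennreal_leI) (simp add: d_def)
    finally show ?thesis .
  qed
  moreover have "0 < c"
    using B K by (simp add: c_def)
  ultimately show ?thesis
    by (auto simp: s_def)
qed

lemma kernel_integral_bound_critical:
  assumes s1: "0 \<le> s1" "s1 < v" and s2: "0 \<le> s2" "s2 < v" and crit: "s1 + s2 = v"
  shows "\<exists>c>0. \<forall>x z. upper_ahlfors_bound nu Y C v x \<longrightarrow> upper_ahlfors_bound nu Y C v z \<longrightarrow>
    x \<noteq> z \<longrightarrow> (\<integral>\<^sup>+ y. inv_pow s1 (dist x y) * inv_pow s2 (dist y z) \<partial>nu)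
      \<le> ennreal (c * (1 + \<bar>ln (dist x z)\<bar>))"
proof -
  define A where "A = C * 4 powr v"
  define B where "B = ball_constant s1 + ball_constant s2"
  define G where "G = A * (2 + 1 / ln 2) + V"
  define c where "c = B + 2 * G"
  have A: "0 < A" and B: "0 < B"
    using C_pos ball_constant_pos[OF s1(2)] ball_constant_pos[OF s2(2)] by (simp_all add: A_def B_def)
  have G: "0 < G"
    using A V_nonneg by (simp add: G_def add_pos_nonneg)
  have "(\<integral>\<^sup>+ y. inv_pow s1 (dist x y) * inv_pow s2 (dist y z) \<partial>nu)
      \<le> ennreal (c * (1 + \<bar>ln (dist x z)\<bar>))"
    if x: "upper_ahlfors_bound nu Y C v x" and z: "upper_ahlfors_bound nu Y C v z" and "x \<noteq> z"
    for x z
  proof -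
    define d where "d = dist x z"
    define L where "L = \<bar>ln d\<bar>"
    define F where "F = A * (1 + \<bar>ln (d / 2)\<bar> / ln 2) + V"
    have d: "0 < d" and L: "0 \<le> L"
      using \<open>x \<noteq> z\<close> by (simp_all add: d_def L_def)
    have "A * (1 + \<bar>ln (d / 2)\<bar> / ln 2) \<le> A * (2 + 1 / ln 2) * (1 + L)"
      using abs_ln_half_le[OF d] A by (simp add: L_def mult.assoc)
    moreover have "V \<le> V * (1 + L)"
      using V_nonneg L by (simp add: algebra_simps)
    ultimately have "F \<le> G * (1 + L)"
      by (simp add: F_def G_def distrib_right)
    moreover have "c * (1 + L) = B + B * L + 2 * (G * (1 + L))"
      by (simp add: c_def algebra_simps)
    moreover have "0 \<le> B * L"
      using B L by simp
    ultimately have arith: "B + 2 * F \<le> c * (1 + L)"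
      by linarith
    have "(\<integral>\<^sup>+ y. inv_pow s1 (dist x y) * inv_pow s2 (dist y z) \<partial>nu) \<le> ennreal (B + 2 * F)"
      using nn_integral_inv_pow_product_le[OF x z s1 s2 \<open>x \<noteq> z\<close>, of F]
        nn_integral_inv_pow_outside_ball_critical d A V_nonneg
      unfolding B_def F_def A_def d_def crit by simp
    also have "\<dots> \<le> ennreal (c * (1 + \<bar>ln (dist x z)\<bar>))"
      using arith by (intro ennreal_leI) (simp add: L_def d_def)
    finally show ?thesis .
  qed
  moreover have "0 < c"
    using B G by (simp add: c_def)
  ultimately show ?thesis
    by blast
qed

lemma kernel_integral_bound_supercritical:
  assumes s1: "0 \<le> s1" "s1 < v" and s2: "0 \<le> s2" "s2 < v" and super: "v < s1 + s2"
  shows "\<exists>c>0. \<forall>x z. upper_ahlfors_bound nu Y C v x \<longrightarrow> upper_ahlfors_bound nu Y C v z \<longrightarrow>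
    x \<noteq> z \<longrightarrow> (\<integral>\<^sup>+ y. inv_pow s1 (dist x y) * inv_pow s2 (dist y z) \<partial>nu)
      \<le> ennreal (c * dist x z powr (v - (s1 + s2)))"
proof -
  define s where "s = s1 + s2"
  define B where "B = ball_constant s1 + ball_constant s2"
  define K where "K = C * 4 powr v / (1 - 2 powr (v - s))"
  define c where "c = (B + 2 * K) / 2 powr (v - s)"
  have B: "0 < B" and K: "0 < K"
    using ball_constant_pos[OF s1(2)] ball_constant_pos[OF s2(2)] C_pos super powr_less_one[of 2 "v - s"]
    by (simp_all add: B_def K_def s_def)
  have "(\<integral>\<^sup>+ y. inv_pow s1 (dist x y) * inv_pow s2 (dist y z) \<partial>nu)
      \<le> ennreal (c * dist x z powr (v - s))"
    if x: "upper_ahlfors_bound nu Y C v x" and z: "upper_ahlfors_bound nu Y C v z" and "x \<noteq> z"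
    for x z
  proof -
    define d where "d = dist x z"
    have d: "0 < d"
      using \<open>x \<noteq> z\<close> by (simp add: d_def)
    have "(\<integral>\<^sup>+ y. inv_pow s (dist p y) * indicator (- ball p (d / 2)) y \<partial>nu)
        \<le> ennreal (K * (d / 2) powr (v - s))" if "upper_ahlfors_bound nu Y C v p" for p
      using nn_integral_inv_pow_outside_ball[OF that super[folded s_def]] d by (simp add: K_def)
    then have "(\<integral>\<^sup>+ y. inv_pow s1 (dist x y) * inv_pow s2 (dist y z) \<partial>nu)
        \<le> ennreal (B * (d / 2) powr (v - s) + 2 * (K * (d / 2) powr (v - s)))"
      using nn_integral_inv_pow_product_le[OF x z s1 s2 \<open>x \<noteq> z\<close>] K
      unfolding B_def d_def s_def by simp
    also have "B * (d / 2) powr (v - s) + 2 * (K * (d / 2) powr (v - s)) = c * d powr (v - s)"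
      using d by (simp add: c_def powr_divide add_divide_distrib algebra_simps)
    finally show ?thesis
      by (simp add: d_def)
  qed
  moreover have "0 < c"
    using B K by (simp add: c_def)
  ultimately show ?thesis
    by (auto simp: s_def)
qed

end

theorem proposition4p1:
  fixes X Y Z :: "'a::metric_space set"
    and nu :: "'a measure"
    and vY s1 s2 :: real
  assumes space_nu: "space nu = Y"
    and borel_sets: "sets (restrict_space borel Y) \<subseteq> sets nu"
    and finite_nu: "emeasure nu Y < \<infinity>"
    and vY_pos: "0 < vY"
    and ahlfors: "upper_ahlfors_regular nu Y vY (X \<union> Z)"
    and s1: "0 \<le> s1" "s1 < vY"
    and s2: "0 \<le> s2" "s2 < vY"
    and strong: "s1 + s2 = vY \<Longrightarrow> strongly_upper_ahlfors_regular nu Y vY (X \<union> Z)"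
  shows "\<exists>c::real. c > 0 \<and> (\<forall>x\<in>X. \<forall>z\<in>Z.
     (s1 + s2 < vY \<longrightarrow>
        (\<integral>\<^sup>+ y. inv_pow s1 (dist x y) * inv_pow s2 (dist y z) \<partial>nu)
          \<le> ennreal (c * (1 + dist x z powr (vY - (s1 + s2))))) \<and>
     (x \<noteq> z \<and> s1 + s2 = vY \<longrightarrow>
        (\<integral>\<^sup>+ y. inv_pow s1 (dist x y) * inv_pow s2 (dist y z) \<partial>nu)
          \<le> ennreal (c * (1 + \<bar>ln (dist x z)\<bar>))) \<and>
     (x \<noteq> z \<and> s1 + s2 > vY \<longrightarrow>
        (\<integral>\<^sup>+ y. inv_pow s1 (dist x y) * inv_pow s2 (dist y z) \<partial>nu)
          \<le> ennreal (c * dist x z powr (vY - (s1 + s2)))))"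
proof -
  obtain C where "0 < C" and bound: "\<forall>x\<in>X \<union> Z. upper_ahlfors_bound nu Y C vY x"
    using upper_ahlfors_regular_imp_bound[OF ahlfors vY_pos finite_nu space_nu] by blast
  interpret finite_borel_measure_on nu Y "enn2real (emeasure nu Y)" vY C
    using space_nu borel_sets finite_nu vY_pos \<open>0 < C\<close>
    by unfold_locales (simp_all add: ennreal_enn2real less_top)
  \<comment> \<open>The critical case only needs upper regularity, so \<open>strong\<close> is not used.\<close>
  consider (sub) "s1 + s2 < vY" | (crit) "s1 + s2 = vY" | (super) "vY < s1 + s2"
    by linarith
  then show ?thesis
  proof cases
    case sub
    then show ?thesis
      using kernel_integral_bound_subcritical[OF s1(1) s2(1) sub] bound by fastforce
  next
    case crit
    then show ?thesis
      using kernel_integral_bound_critical[OF s1 s2 crit] bound by fastforce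
  next
    case super
    then show ?thesis
      using kernel_integral_bound_supercritical[OF s1 s2 super] bound by fastforce
  qed
qed

end
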